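(* Let $g\in\mathcal D$, let $Y_1,Y_2$ be i.i.d. with density $g$, let $k\in\mathbb N$ and define $h:[0,1)^2\to\mathbb R$ by $$h(y_1,y_2):=\sum_{j\in\mathbb Z:|j|\in[k]}\frac{(e_j(-y_1)-g_j)(e_j(y_2)-\overline{g_j})}{|\varphi_j|^2}.$$ Then $h$ is real-valued, bounded, symmetric ($h(y_1,y_2)=h(y_2,y_1)$) and satisfies $\mathbb E[h(Y_1,y_2)]=0$ for all $y_2\in[0,1)$. Moreover, with $\mathsf A:=4\nu_k^4$, $\mathsf B:=3\|g_\bullet\|_{\ell^2}\nu_k^3$, $\mathsf C:=2\|g_\bullet\|_{\ell^2}\nu_k^2$ and $\mathsf D:=\mathsf C$, one has $\sup_{y_1,y_2}|h(y_1,y_2)|\le\mathsf A$, $\sup_{y_2}\mathbb E h^2(Y_1,y_2)\le\mathsf B^2$, $\mathbb E h^2(Y_1,Y_2)\le\mathsf C^2$ and $\sup\{\mathbb E[h(Y_1,Y_2)\zeta(Y_1)\xi(Y_2)]:\mathbb E\zeta^2(Y_1)\le1,\mathbb E\xi^2(Y_2)\le1\}\le\mathsf D$. If in addition $L^2(g)=L^2_{\mathbb R}$, then the last inequality also holds with $\mathsf D:=4\|g_\bullet\|_{\ell^1}m_k^2$.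
   Context: $L^2:=L^2([0,1))$ complex-valued square-integrable functions with $\langle h_1,h_2\rangle=\int_0^1h_1\overline{h_2}$. $e_j(x):=\exp(-\mathrm i2\pi jx)$, $h_j:=\langle h,e_j\rangle$ for $j\in\mathbb Z$; $\|h_\bullet\|_{\ell^p}:=(\sum_{j\in\mathbb Z}|h_j|^p)^{1/p}$. $\mathcal D$ is the set of real-valued probability densities on $[0,1)$ in $L^2$. $\varphi\in\mathcal D$ is a fixed (error) density with $|\varphi_j|>0$ for all $j\in\mathbb Z$. $[k]:=\{1,\dots,k\}$, $\nu_k:=(\sum_{|j|\in[k]}|\varphi_j|^{-4})^{1/4}$, $m_k:=\max_{j\in[k]}|\varphi_j|^{-1}$. For a density $g$, $L^2(g)$ is the set of real-valued Borel functions $u$ on $[0,1)$ with $\int_0^1u^2g<\infty$, and $L^2_{\mathbb R}:=L^2(\mathbb 1_{[0,1)})$. The suprema over $\zeta,\xi$ range over real Borel functions. *)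

theory Defs
  imports "HOL-Analysis.Analysis"
begin

definition M01 :: "real measure" where
  "M01 = restrict_space lborel {0..<1}"

definition ej :: "int \<Rightarrow> real \<Rightarrow> complex" where
  "ej j x = cis (- 2 * pi * real_of_int j * x)"

definition fcoef :: "(real \<Rightarrow> real) \<Rightarrow> int \<Rightarrow> complex" where
  "fcoef h j = (LINT x|M01. complex_of_real (h x) * cnj (ej j x))"

definition dens :: "(real \<Rightarrow> real) \<Rightarrow> bool" where
  "dens g \<longleftrightarrow> g \<in> borel_measurable M01 \<and> (\<forall>x\<in>{0..<1}. 0 \<le> g x)
     \<and> integrable M01 g \<and> integral\<^sup>L M01 g = 1 \<and> integrable M01 (\<lambda>x. (g x)\<^sup>2)"

definition Jk :: "nat \<Rightarrow> int set" where
  "Jk k = {j. 1 \<le> \<bar>j\<bar> \<and> \<bar>j\<bar> \<le> int k}"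

definition nuk :: "(real \<Rightarrow> real) \<Rightarrow> nat \<Rightarrow> real" where
  "nuk \<phi> k = root 4 (\<Sum>j\<in>Jk k. 1 / (cmod (fcoef \<phi> j)) ^ 4)"

definition mk :: "(real \<Rightarrow> real) \<Rightarrow> nat \<Rightarrow> real" where
  "mk \<phi> k = Max ((\<lambda>j. 1 / cmod (fcoef \<phi> j)) ` {1..int k})"

text \<open>The kernel h (complex-valued a priori).\<close>
definition hk :: "(real \<Rightarrow> real) \<Rightarrow> (real \<Rightarrow> real) \<Rightarrow> nat \<Rightarrow> real \<Rightarrow> real \<Rightarrow> complex" where
  "hk \<phi> g k y1 y2 = (\<Sum>j\<in>Jk k.
      (ej j (- y1) - fcoef g j) * (ej j y2 - cnj (fcoef g j)) / complex_of_real ((cmod (fcoef \<phi> j))\<^sup>2))"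

definition l2norm :: "(real \<Rightarrow> real) \<Rightarrow> real" where
  "l2norm g = sqrt (\<Sum>\<^sub>\<infinity>j::int. (cmod (fcoef g j))\<^sup>2)"

text \<open>l^1 norm of the Fourier coefficients of g, as an extended nonnegative real (may be infinite).\<close>
definition l1norm :: "(real \<Rightarrow> real) \<Rightarrow> ennreal" where
  "l1norm g = (\<Sum>\<^sub>\<infinity>j::int. ennreal (cmod (fcoef g j)))"

definition L2w :: "(real \<Rightarrow> real) \<Rightarrow> (real \<Rightarrow> real) set" where
  "L2w w = {u. u \<in> borel_measurable M01 \<and> integrable M01 (\<lambda>x. (u x)\<^sup>2 * w x)}"

end

theory Submission
  imports Defs
begin

(*
  Write a_j(y) = e_j(-y) - g_j = exp(2 pi i j y) - g_j and w_j = |phi_j|^-2, so that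
  h(y1,y2) = sum_j w_j a_j(y1) conj(a_j(y2)).  Since a_(-j) = conj(a_j) and w_(-j) = w_j, h is
  real and symmetric, and E a_j(Y) = 0 gives the vanishing mean.  The moment bounds all come
  from the covariances E[a_j(Y) conj(a_l(Y))] = g_(j-l) - g_j conj(g_l): the second moment of
  sum_j c_j a_j(Y) is at most sum_(j,l) |c_j| |c_l| |g_(j-l)|, which is bounded by Cauchy-Schwarz
  and Bessel's inequality in terms of nu_k and ||g||_l2, or by a Schur test in terms of
  ||g||_l1.  The bilinear bound with constant C is Cauchy-Schwarz in L^2(g x g); the l1 bound
  applies Cauchy-Schwarz to E[h(Y1,Y2) zeta(Y1) xi(Y2)] = sum_j w_j E[a_j zeta] conj(E[a_j xi]).
  That argument works for every density g.
*)

section \<open>Elementary inequalities\<close>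

lemma sum_uminus_reindex:
  "(\<And>j. - j \<in> F \<longleftrightarrow> j \<in> F) \<Longrightarrow> (\<Sum>j\<in>F. f (- j)) = (\<Sum>j\<in>F. f (j::int))"
  by (rule sum.reindex_bij_witness[of _ uminus uminus]) auto

lemma mult_le_AM_GM_param:
  fixes a b t :: real
  assumes "0 < t"
  shows "a * b \<le> (t * a\<^sup>2 + b\<^sup>2 / t) / 2"
proof -
  have "2 * (t * a) * b \<le> (t * a)\<^sup>2 + b\<^sup>2" by (rule sum_squares_bound)
  with assms show ?thesis by (simp add: field_simps power2_eq_square)
qed

lemma le_sqrt_mult_if_AM_GM_bounds:
  fixes I A B :: real
  assumes "0 \<le> A" "0 \<le> B" and bound: "\<And>t. 0 < t \<Longrightarrow> I \<le> (t * A + B / t) / 2"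
  shows "I \<le> sqrt A * sqrt B"
proof (cases "A = 0 \<or> B = 0")
  case True
  show ?thesis
  proof (rule ccontr)
    assume "\<not> ?thesis"
    with True have I: "0 < I" by auto
    have "I \<le> I / 2"
    proof (cases "A = 0")
      case True
      have "I * t \<le> B / 2" if "0 < t" for t
        using bound[OF that] that True by (simp add: field_simps)
      from this[of "B / I + 1"] I assms(2) show ?thesis
        by (simp add: add_nonneg_pos distrib_left)
    next
      case False
      with \<open>A = 0 \<or> B = 0\<close> assms(1) have "B = 0" "0 < A" by auto
      from bound[of "I / A"] I \<open>0 < A\<close> show ?thesis by (simp add: \<open>B = 0\<close>)
    qed
    with I show False by simp
  qed
next
  case False
  with assms have pos: "0 < sqrt A" "0 < sqrt B" by auto
  have "sqrt B / sqrt A * A = sqrt B * (A / sqrt A)" "B / (sqrt B / sqrt A) = B / sqrt B * sqrt A"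
    by simp_all
  then have "sqrt B / sqrt A * A = sqrt A * sqrt B" "B / (sqrt B / sqrt A) = sqrt A * sqrt B"
    using assms by (simp_all add: real_div_sqrt)
  with bound[of "sqrt B / sqrt A"] pos show ?thesis
    by simp
qed

lemma Schur_test_sum:
  fixes x :: "'i \<Rightarrow> real" and K :: "'i \<Rightarrow> 'i \<Rightarrow> real"
  assumes "finite F" and K_sym: "\<And>j l. K j l = K l j" and K_nonneg: "\<And>j l. 0 \<le> K j l"
    and row_sums: "\<And>j. j \<in> F \<Longrightarrow> (\<Sum>l\<in>F. K j l) \<le> L"
  shows "(\<Sum>j\<in>F. \<Sum>l\<in>F. \<bar>x j\<bar> * \<bar>x l\<bar> * K j l) \<le> L * (\<Sum>j\<in>F. (x j)\<^sup>2)"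
proof -
  have "(\<Sum>j\<in>F. \<Sum>l\<in>F. \<bar>x j\<bar> * \<bar>x l\<bar> * K j l)
      \<le> (\<Sum>j\<in>F. \<Sum>l\<in>F. ((x j)\<^sup>2 * K j l + (x l)\<^sup>2 * K l j) / 2)"
  proof (intro sum_mono)
    fix j l
    have "2 * \<bar>x j\<bar> * \<bar>x l\<bar> * K j l \<le> ((x j)\<^sup>2 + (x l)\<^sup>2) * K j l"
      using sum_squares_bound[of "\<bar>x j\<bar>" "\<bar>x l\<bar>"] K_nonneg by (intro mult_right_mono) auto
    then show "\<bar>x j\<bar> * \<bar>x l\<bar> * K j l \<le> ((x j)\<^sup>2 * K j l + (x l)\<^sup>2 * K l j) / 2"
      by (simp add: K_sym[of l j] algebra_simps)
  qed
  also have "\<dots> = ((\<Sum>j\<in>F. \<Sum>l\<in>F. (x j)\<^sup>2 * K j l) + (\<Sum>j\<in>F. \<Sum>l\<in>F. (x l)\<^sup>2 * K l j)) / 2"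
    by (simp only: sum_divide_distrib[symmetric] sum.distrib)
  also have "(\<Sum>j\<in>F. \<Sum>l\<in>F. (x l)\<^sup>2 * K l j) = (\<Sum>j\<in>F. \<Sum>l\<in>F. (x j)\<^sup>2 * K j l)"
    by (rule sum.swap)
  also have "(\<Sum>j\<in>F. \<Sum>l\<in>F. (x j)\<^sup>2 * K j l) = (\<Sum>j\<in>F. (x j)\<^sup>2 * (\<Sum>l\<in>F. K j l))"
    by (simp add: sum_distrib_left)
  also have "((\<Sum>j\<in>F. (x j)\<^sup>2 * (\<Sum>l\<in>F. K j l)) + (\<Sum>j\<in>F. (x j)\<^sup>2 * (\<Sum>l\<in>F. K j l))) / 2
      \<le> (\<Sum>j\<in>F. (x j)\<^sup>2 * L)"
    using row_sums by (simp add: sum_mono mult_left_mono)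
  finally show ?thesis
    by (simp add: sum_distrib_left mult.commute)
qed

section \<open>Weighted integrals\<close>

lemma borel_measurable_cnj [measurable (raw)]:
  "f \<in> borel_measurable M \<Longrightarrow> (\<lambda>x. cnj (f x)) \<in> borel_measurable M"
  by (rule measurable_compose[OF _ borel_measurable_continuous_onI]) simp_all

lemma integrable_mult_of_real_if_bounded:
  fixes f :: "'a \<Rightarrow> 'b::{real_normed_algebra_1, banach, second_countable_topology}"
  assumes w: "integrable M w" and [measurable]: "f \<in> borel_measurable M"
    and bdd: "\<And>x. x \<in> space M \<Longrightarrow> norm (f x) \<le> B"
  shows "integrable M (\<lambda>x. f x * of_real (w x))"
proof (rule Bochner_Integration.integrable_bound[where f="\<lambda>x. B * \<bar>w x\<bar>"])
  show "integrable M (\<lambda>x. B * \<bar>w x\<bar>)" using w by simp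
  have [measurable]: "w \<in> borel_measurable M" using w by simp
  show "(\<lambda>x. f x * of_real (w x)) \<in> borel_measurable M" by measurable
  show "AE x in M. norm (f x * of_real (w x)) \<le> norm (B * \<bar>w x\<bar>)"
  proof (rule AE_I2)
    fix x assume "x \<in> space M"
    have "norm (f x * of_real (w x)) \<le> norm (f x) * \<bar>w x\<bar>"
      using norm_mult_ineq[of "f x" "of_real (w x)"] by simp
    also have "\<dots> \<le> B * \<bar>w x\<bar>"
      using bdd[OF \<open>x \<in> space M\<close>] by (rule mult_right_mono) simp
    finally show "norm (f x * of_real (w x)) \<le> norm (B * \<bar>w x\<bar>)" by simp
  qed
qed

lemma
  fixes f u w :: "'a \<Rightarrow> real"
  assumes [measurable]: "f \<in> borel_measurable M" "u \<in> borel_measurable M" "w \<in> borel_measurable M"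
    and w: "AE x in M. 0 \<le> w x"
    and f: "integrable M (\<lambda>x. (f x)\<^sup>2 * w x)" and u: "integrable M (\<lambda>x. (u x)\<^sup>2 * w x)"
  shows weighted_Cauchy_Schwarz_integrable: "integrable M (\<lambda>x. f x * u x * w x)"
    and weighted_Cauchy_Schwarz:
      "(LINT x|M. f x * u x * w x)
         \<le> sqrt (LINT x|M. (f x)\<^sup>2 * w x) * sqrt (LINT x|M. (u x)\<^sup>2 * w x)"
proof -
  have AM_GM: "f x * u x * w x \<le> (t * ((f x)\<^sup>2 * w x) + (u x)\<^sup>2 * w x / t) / 2"
    if "0 < t" "0 \<le> w x" for t x
    using mult_right_mono[OF mult_le_AM_GM_param[OF \<open>0 < t\<close>] \<open>0 \<le> w x\<close>]
    by (simp add: algebra_simps add_divide_distrib)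
  have sum_integrable: "integrable M (\<lambda>x. (t * ((f x)\<^sup>2 * w x) + (u x)\<^sup>2 * w x / t) / 2)" for t
    using f u by simp
  show integrable: "integrable M (\<lambda>x. f x * u x * w x)"
  proof (rule Bochner_Integration.integrable_bound[OF sum_integrable[of 1]])
    show "AE x in M. norm (f x * u x * w x) \<le> norm ((1 * ((f x)\<^sup>2 * w x) + (u x)\<^sup>2 * w x / 1) / 2)"
      using w
    proof eventually_elim
      case (elim x)
      have "2 * \<bar>f x\<bar> * \<bar>u x\<bar> * w x \<le> ((f x)\<^sup>2 + (u x)\<^sup>2) * w x"
        using sum_squares_bound[of "\<bar>f x\<bar>" "\<bar>u x\<bar>"] elim by (intro mult_right_mono) auto
      with elim show ?case
        by (simp add: abs_mult algebra_simps)
    qed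
  qed measurable
  show "(LINT x|M. f x * u x * w x)
         \<le> sqrt (LINT x|M. (f x)\<^sup>2 * w x) * sqrt (LINT x|M. (u x)\<^sup>2 * w x)"
  proof (rule le_sqrt_mult_if_AM_GM_bounds)
    show "0 \<le> (LINT x|M. (f x)\<^sup>2 * w x)" "0 \<le> (LINT x|M. (u x)\<^sup>2 * w x)"
      using w by (auto intro!: integral_nonneg_AE)
    fix t :: real assume "0 < t"
    have "AE x in M. f x * u x * w x \<le> (t * ((f x)\<^sup>2 * w x) + (u x)\<^sup>2 * w x / t) / 2"
      using w by eventually_elim (rule AM_GM[OF \<open>0 < t\<close>])
    then have "(LINT x|M. f x * u x * w x)
        \<le> (LINT x|M. (t * ((f x)\<^sup>2 * w x) + (u x)\<^sup>2 * w x / t) / 2)"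
      by (intro integral_mono_AE integrable sum_integrable)
    also have "\<dots> = (t * (LINT x|M. (f x)\<^sup>2 * w x) + (LINT x|M. (u x)\<^sup>2 * w x) / t) / 2"
      using f u by simp
    finally show "(LINT x|M. f x * u x * w x)
        \<le> (t * (LINT x|M. (f x)\<^sup>2 * w x) + (LINT x|M. (u x)\<^sup>2 * w x) / t) / 2" .
  qed
qed

context pair_sigma_finite
begin

lemma
  fixes f1 :: "'a \<Rightarrow> 'c::{real_normed_field, banach, second_countable_topology}" and f2 :: "'b \<Rightarrow> 'c"
  assumes f1: "integrable M1 f1" and f2: "integrable M2 f2"
  shows integrable_mult_fst_snd: "integrable (M1 \<Otimes>\<^sub>M M2) (\<lambda>z. f1 (fst z) * f2 (snd z))"
    and integral_mult_fst_snd: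
      "(LINT z|(M1 \<Otimes>\<^sub>M M2). f1 (fst z) * f2 (snd z)) = (LINT x|M1. f1 x) * (LINT y|M2. f2 y)"
proof -
  have [measurable]: "f1 \<in> borel_measurable M1" "f2 \<in> borel_measurable M2" using f1 f2 by auto
  show integrable: "integrable (M1 \<Otimes>\<^sub>M M2) (\<lambda>z. f1 (fst z) * f2 (snd z))"
  proof (rule Fubini_integrable)
    have "integrable M1 (\<lambda>x. norm (f1 x) * (LINT y|M2. norm (f2 y)))"
      using f1 by (intro integrable_mult_left) simp
    then show "integrable M1 (\<lambda>x. LINT y|M2. norm (f1 (fst (x, y)) * f2 (snd (x, y))))"
      by (simp add: norm_mult)
    show "AE x in M1. integrable M2 (\<lambda>y. f1 (fst (x, y)) * f2 (snd (x, y)))"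
      using f2 by simp
  qed measurable
  have "(LINT z|(M1 \<Otimes>\<^sub>M M2). f1 (fst z) * f2 (snd z)) = (LINT x|M1. LINT y|M2. f1 x * f2 y)"
    using integral_fst'[OF integrable] by simp
  then show "(LINT z|(M1 \<Otimes>\<^sub>M M2). f1 (fst z) * f2 (snd z)) = (LINT x|M1. f1 x) * (LINT y|M2. f2 y)"
    by simp
qed

end

lemma
  fixes f :: "'i \<Rightarrow> 'a \<Rightarrow> complex" and c :: "'i \<Rightarrow> complex" and w :: "'a \<Rightarrow> real"
  assumes F: "finite F" and w: "integrable M w"
    and meas: "\<And>j. j \<in> F \<Longrightarrow> f j \<in> borel_measurable M"
    and bdd: "\<And>j x. j \<in> F \<Longrightarrow> x \<in> space M \<Longrightarrow> cmod (f j x) \<le> B"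
  shows integrable_norm_sum_sq: "integrable M (\<lambda>x. (cmod (\<Sum>j\<in>F. c j * f j x))\<^sup>2 * w x)"
    and integral_norm_sum_sq:
      "(LINT x|M. (cmod (\<Sum>j\<in>F. c j * f j x))\<^sup>2 * w x)
         = Re (\<Sum>j\<in>F. \<Sum>l\<in>F. c j * cnj (c l) * (CLINT x|M. f j x * cnj (f l x) * of_real (w x)))"
proof -
  have [measurable]: "f j \<in> borel_measurable M" if "j \<in> F" for j using meas that .
  have pairs_integrable: "integrable M (\<lambda>x. f j x * cnj (f l x) * of_real (w x))"
    if "j \<in> F" "l \<in> F" for j l
  proof (rule integrable_mult_of_real_if_bounded[OF w, where B="B * B"])
    show "(\<lambda>x. f j x * cnj (f l x)) \<in> borel_measurable M" using that by measurable
    fix x assume "x \<in> space M"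
    with that show "norm (f j x * cnj (f l x)) \<le> B * B"
      by (auto simp: norm_mult intro!: mult_mono bdd order_trans[OF norm_ge_zero bdd])
  qed
  have expand: "complex_of_real ((cmod (\<Sum>j\<in>F. c j * f j x))\<^sup>2 * w x)
      = (\<Sum>j\<in>F. \<Sum>l\<in>F. c j * cnj (c l) * (f j x * cnj (f l x) * of_real (w x)))" for x
  proof -
    have "complex_of_real ((cmod (\<Sum>j\<in>F. c j * f j x))\<^sup>2)
        = (\<Sum>j\<in>F. c j * f j x) * cnj (\<Sum>j\<in>F. c j * f j x)"
      by (rule complex_norm_square)
    also have "\<dots> = (\<Sum>j\<in>F. \<Sum>l\<in>F. c j * cnj (c l) * (f j x * cnj (f l x)))"
      unfolding cnj_sum sum_product by (intro sum.cong refl) (simp add: algebra_simps)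
    finally show ?thesis
      by (simp add: sum_distrib_right mult.assoc)
  qed
  have "integrable M (\<lambda>x. complex_of_real ((cmod (\<Sum>j\<in>F. c j * f j x))\<^sup>2 * w x))"
    unfolding expand using pairs_integrable by auto
  then show "integrable M (\<lambda>x. (cmod (\<Sum>j\<in>F. c j * f j x))\<^sup>2 * w x)"
    by (rule complex_of_real_integrable_eq[THEN iffD1])
  have "complex_of_real (LINT x|M. (cmod (\<Sum>j\<in>F. c j * f j x))\<^sup>2 * w x)
      = (\<Sum>j\<in>F. \<Sum>l\<in>F. c j * cnj (c l) * (CLINT x|M. f j x * cnj (f l x) * of_real (w x)))"
    unfolding integral_complex_of_real[symmetric] expand using pairs_integrable by simp
  then show "(LINT x|M. (cmod (\<Sum>j\<in>F. c j * f j x))\<^sup>2 * w x)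
      = Re (\<Sum>j\<in>F. \<Sum>l\<in>F. c j * cnj (c l) * (CLINT x|M. f j x * cnj (f l x) * of_real (w x)))"
    by (metis Re_complex_of_real)
qed

section \<open>Characters and Fourier coefficients\<close>

lemma space_M01 [simp]: "space M01 = {0..<1}"
  by (simp add: M01_def)

lemma emeasure_M01_space: "emeasure M01 (space M01) = 1"
  by (simp add: M01_def emeasure_restrict_space)

interpretation M01: finite_measure M01
  using emeasure_M01_space by (intro finite_measureI) simp

interpretation M01_pair: pair_sigma_finite M01 M01 ..

lemma borel_measurable_M01I: "f \<in> borel_measurable borel \<Longrightarrow> f \<in> borel_measurable M01"
  unfolding M01_def by (rule measurable_restrict_space1) simp

lemma integral_M01_eq_interval_integral:
  fixes f :: "real \<Rightarrow> 'b::{banach, second_countable_topology}"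
  shows "(LINT x|M01. f x) = (LBINT x=ereal 0..ereal 1. f x)"
proof -
  have "(LINT x|M01. f x) = (LBINT x:{0..<1}. f x)"
    unfolding M01_def set_lebesgue_integral_def by (rule integral_restrict_space) simp
  also have "\<dots> = (LBINT x=ereal 0..ereal 1. f x)"
    using interval_integral_Ico[of 0 1 f] by simp
  finally show ?thesis .
qed

definition chi :: "int \<Rightarrow> real \<Rightarrow> complex" where
  "chi j y = cis (2 * pi * of_int j * y)"

lemma chi_eq_cnj_ej: "chi j y = cnj (ej j y)"
  and ej_uminus: "ej j (- y) = chi j y"
  by (simp_all add: chi_def ej_def cis_cnj)

lemma norm_chi [simp]: "norm (chi j y) = 1"
  by (simp add: chi_def)

lemma chi_mult_cnj: "chi j y * cnj (chi l y) = chi (j - l) y"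
  by (simp add: chi_def cis_cnj cis_mult algebra_simps)

lemma chi_uminus: "chi (- j) y = cnj (chi j y)"
  by (simp add: chi_def cis_cnj)

lemma borel_measurable_chi [measurable]: "chi j \<in> borel_measurable M01"
  unfolding chi_def by (intro borel_measurable_M01I borel_measurable_continuous_onI continuous_intros)

lemma integral_chi: "(CLINT y|M01. chi j y) = (if j = 0 then 1 else 0)"
proof (cases "j = 0")
  case True
  then show ?thesis
    using emeasure_M01_space by (simp add: chi_def measure_def)
next
  case False
  define c where "c = complex_of_real (2 * pi * of_int j) * \<i>"
  have "c \<noteq> 0" using False by (simp add: c_def)
  have "(LBINT y=ereal 0..ereal 1. chi j y) = chi j 1 / c - chi j 0 / c"
  proof (rule interval_integral_FTC_finite)
    show "continuous_on {min 0 1..max 0 1} (chi j)"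
      unfolding chi_def by (intro continuous_intros)
    fix y :: real
    have "(chi j has_vector_derivative c * chi j y) (at y within {min 0 1..max 0 1})"
      unfolding chi_def c_def has_vector_derivative_def
      by (rule has_derivative_eq_rhs[OF has_derivative_cis])
        (auto intro!: derivative_eq_intros simp: fun_eq_iff scaleR_conv_of_real algebra_simps)
    from has_vector_derivative_divide[OF this, of c] \<open>c \<noteq> 0\<close>
    show "((\<lambda>y. chi j y / c) has_vector_derivative chi j y) (at y within {min 0 1..max 0 1})"
      by simp
  qed
  moreover have "chi j 1 = 1" "chi j 0 = 1"
    using cis_multiple_2pi[of "of_int j"] by (simp_all add: chi_def)
  ultimately show ?thesis
    using False by (simp add: integral_M01_eq_interval_integral)
qed

lemma fcoef_eq_integral_chi: "fcoef h j = (CLINT x|M01. chi j x * of_real (h x))"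
  by (simp add: fcoef_def chi_eq_cnj_ej mult.commute)

lemma fcoef_uminus: "fcoef h (- j) = cnj (fcoef h j)"
  unfolding fcoef_eq_integral_chi chi_uminus
  by (simp only: complex_cnj_mult complex_cnj_complex_of_real flip: Bochner_Integration.integral_cnj)

lemma
  assumes "dens g"
  shows dens_borel_measurable: "g \<in> borel_measurable M01"
    and dens_nonneg: "x \<in> {0..<1} \<Longrightarrow> 0 \<le> g x"
    and dens_integrable: "integrable M01 g"
    and dens_integral: "integral\<^sup>L M01 g = 1"
    and dens_square_integrable: "integrable M01 (\<lambda>x. (g x)\<^sup>2)"
  using assms by (auto simp: dens_def)

lemma fcoef_dens_0: "dens g \<Longrightarrow> fcoef g 0 = 1"
  by (simp add: fcoef_eq_integral_chi chi_def dens_integral)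

lemma norm_fcoef_dens_le_1:
  assumes g: "dens g"
  shows "cmod (fcoef g j) \<le> 1"
proof -
  have "cmod (fcoef g j) \<le> (LINT x|M01. cmod (chi j x * of_real (g x)))"
    unfolding fcoef_eq_integral_chi by (rule integral_norm_bound)
  also have "\<dots> = (LINT x|M01. g x)"
    using dens_nonneg[OF g] by (intro Bochner_Integration.integral_cong) (auto simp: norm_mult)
  finally show ?thesis using dens_integral[OF g] by simp
qed

lemma integral_norm_trig_poly_sq:
  assumes "finite F"
  shows "(LINT y|M01. (cmod (\<Sum>j\<in>F. c j * chi j y))\<^sup>2) = (\<Sum>j\<in>F. (cmod (c j))\<^sup>2)"
proof -
  have "(LINT y|M01. (cmod (\<Sum>j\<in>F. c j * chi j y))\<^sup>2 * 1)
      = Re (\<Sum>j\<in>F. \<Sum>l\<in>F. c j * cnj (c l) * (CLINT y|M01. chi j y * cnj (chi l y) * of_real 1))"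
    by (rule integral_norm_sum_sq[OF assms, where B=1]) auto
  also have "\<dots> = Re (\<Sum>j\<in>F. c j * cnj (c j))"
    using assms by (simp add: chi_mult_cnj integral_chi if_distrib[of "\<lambda>x. _ * x"] sum.If_cases)
  also have "\<dots> = (\<Sum>j\<in>F. (cmod (c j))\<^sup>2)"
    by (simp flip: complex_norm_square)
  finally show ?thesis by simp
qed

lemma Bessel_inequality_fcoef:
  assumes [measurable]: "g \<in> borel_measurable M01"
    and g2: "integrable M01 (\<lambda>x. (g x)\<^sup>2)" and F: "finite F"
  shows "(\<Sum>j\<in>F. (cmod (fcoef g j))\<^sup>2) \<le> (LINT x|M01. (g x)\<^sup>2)"
proof -
  define P where "P y = (\<Sum>j\<in>F. cnj (fcoef g j) * chi j y)" for y
  define S where "S = (\<Sum>j\<in>F. (cmod (fcoef g j))\<^sup>2)"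
  have g: "integrable M01 g"
    using g2 by (rule M01.square_integrable_imp_integrable[rotated]) simp
  have P_bounded: "cmod (P y) \<le> (\<Sum>j\<in>F. cmod (fcoef g j))" for y
    unfolding P_def by (rule order_trans[OF norm_sum]) (simp add: norm_mult)
  have P_integrable: "integrable M01 (\<lambda>x. (cmod (P x))\<^sup>2)"
    using integrable_norm_sum_sq[OF F M01.integrable_const[of 1], where f=chi and B=1]
    by (simp add: P_def)
  have "(CLINT x|M01. P x * of_real (g x))
      = (\<Sum>j\<in>F. cnj (fcoef g j) * (CLINT x|M01. chi j x * of_real (g x)))"
    using integrable_mult_of_real_if_bounded[OF g borel_measurable_chi, where B=1]
    by (simp add: P_def sum_distrib_right mult.assoc)
  also have "\<dots> = complex_of_real S"
    unfolding S_def of_real_sum fcoef_eq_integral_chi[symmetric]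
    by (intro sum.cong refl) (metis complex_norm_square mult.commute)
  finally have "S \<le> cmod (CLINT x|M01. P x * of_real (g x))"
    by (metis norm_of_real abs_ge_self)
  also have "\<dots> \<le> (LINT x|M01. cmod (P x) * \<bar>g x\<bar>)"
    using integral_norm_bound[of M01 "\<lambda>x. P x * of_real (g x)"] by (simp add: norm_mult)
  also have "\<dots> \<le> (LINT x|M01. ((cmod (P x))\<^sup>2 + (g x)\<^sup>2) / 2)"
  proof (rule integral_mono)
    have "integrable M01 (\<lambda>x. P x * of_real (g x))"
      by (rule integrable_mult_of_real_if_bounded[OF g _ P_bounded]) (simp add: P_def)
    from integrable_norm[OF this] show "integrable M01 (\<lambda>x. cmod (P x) * \<bar>g x\<bar>)"
      by (simp add: norm_mult)
    show "integrable M01 (\<lambda>x. ((cmod (P x))\<^sup>2 + (g x)\<^sup>2) / 2)"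
      using P_integrable g2 by simp
    show "cmod (P x) * \<bar>g x\<bar> \<le> ((cmod (P x))\<^sup>2 + (g x)\<^sup>2) / 2" for x
      using sum_squares_bound[of "cmod (P x)" "\<bar>g x\<bar>"] by simp
  qed
  also have "\<dots> = (S + (LINT x|M01. (g x)\<^sup>2)) / 2"
    using P_integrable g2 by (simp add: P_def S_def integral_norm_trig_poly_sq[OF F])
  finally show ?thesis by (simp add: S_def)
qed

context
  fixes g :: "real \<Rightarrow> real"
  assumes g_measurable: "g \<in> borel_measurable M01"
    and g_square_integrable: "integrable M01 (\<lambda>x. (g x)\<^sup>2)"
begin

lemma summable_on_norm_fcoef_sq: "(\<lambda>j. (cmod (fcoef g j))\<^sup>2) summable_on UNIV"
proof (rule nonneg_bdd_above_summable_on)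
  show "bdd_above (sum (\<lambda>j. (cmod (fcoef g j))\<^sup>2) ` {F. F \<subseteq> UNIV \<and> finite F})"
    using Bessel_inequality_fcoef[OF g_measurable g_square_integrable]
    by (intro bdd_aboveI[where M="LINT x|M01. (g x)\<^sup>2"]) auto
qed simp

lemma l2norm_sq: "(l2norm g)\<^sup>2 = (\<Sum>\<^sub>\<infinity>j. (cmod (fcoef g j))\<^sup>2)"
  unfolding l2norm_def by (simp add: infsum_nonneg)

lemma sum_norm_fcoef_sq_le_l2norm_sq:
  assumes "finite F" "inj_on \<sigma> F"
  shows "(\<Sum>l\<in>F. (cmod (fcoef g (\<sigma> l)))\<^sup>2) \<le> (l2norm g)\<^sup>2"
proof -
  have "(\<Sum>l\<in>F. (cmod (fcoef g (\<sigma> l)))\<^sup>2) = (\<Sum>j\<in>\<sigma> ` F. (cmod (fcoef g j))\<^sup>2)"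
    using assms(2) by (simp add: sum.reindex)
  also have "\<dots> \<le> (l2norm g)\<^sup>2"
    unfolding l2norm_sq using assms(1)
    by (intro finite_sum_le_infsum[OF summable_on_norm_fcoef_sq]) auto
  finally show ?thesis .
qed

end

lemma l2norm_dens_ge_1:
  assumes "dens g"
  shows "1 \<le> l2norm g"
proof -
  have "(cmod (fcoef g (id 0)))\<^sup>2 \<le> (l2norm g)\<^sup>2"
    using sum_norm_fcoef_sq_le_l2norm_sq[of g "{0}" id] assms
    by (simp add: dens_borel_measurable dens_square_integrable)
  then have "1\<^sup>2 \<le> (l2norm g)\<^sup>2"
    using assms by (simp add: fcoef_dens_0)
  moreover have "0 \<le> l2norm g"
    by (simp add: l2norm_def infsum_nonneg)
  ultimately show ?thesis
    by (rule power2_le_imp_le)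
qed

lemma sum_norm_fcoef_le_l1norm:
  assumes "finite F" "inj_on \<sigma> F"
  shows "ennreal (\<Sum>l\<in>F. cmod (fcoef g (\<sigma> l))) \<le> l1norm g"
proof -
  have "ennreal (\<Sum>l\<in>F. cmod (fcoef g (\<sigma> l))) = (\<Sum>j\<in>\<sigma> ` F. ennreal (cmod (fcoef g j)))"
    using assms by (simp add: sum.reindex)
  also have "\<dots> = (\<Sum>\<^sub>\<infinity>j\<in>\<sigma> ` F. ennreal (cmod (fcoef g j)))"
    using assms by simp
  also have "\<dots> \<le> l1norm g"
    unfolding l1norm_def by (rule infsum_mono_neutral) (auto intro!: nonneg_summable_on_complete)
  finally show ?thesis .
qed

definition centered_chi :: "(real \<Rightarrow> real) \<Rightarrow> int \<Rightarrow> real \<Rightarrow> complex" where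
  "centered_chi g j y = chi j y - fcoef g j"

lemma borel_measurable_centered_chi [measurable]: "centered_chi g j \<in> borel_measurable M01"
  unfolding centered_chi_def by measurable

lemma centered_chi_uminus: "centered_chi g (- j) y = cnj (centered_chi g j y)"
  by (simp add: centered_chi_def chi_uminus fcoef_uminus)

lemma norm_centered_chi_le_2:
  assumes "dens g"
  shows "cmod (centered_chi g j y) \<le> 2"
proof -
  have "cmod (centered_chi g j y) \<le> cmod (chi j y) + cmod (fcoef g j)"
    unfolding centered_chi_def by (rule norm_triangle_ineq4)
  with norm_fcoef_dens_le_1[OF assms, of j] show ?thesis by simp
qed

context
  fixes g :: "real \<Rightarrow> real"
  assumes g: "dens g"
begin

lemma integrable_chi_mult_dens: "integrable M01 (\<lambda>y. chi j y * of_real (g y))"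
  by (rule integrable_mult_of_real_if_bounded[OF dens_integrable[OF g], where B=1]) auto

lemma integral_centered_chi_dens: "(CLINT y|M01. centered_chi g j y * of_real (g y)) = 0"
proof -
  have "(CLINT y|M01. centered_chi g j y * of_real (g y))
      = (CLINT y|M01. chi j y * of_real (g y)) - fcoef g j * (CLINT y|M01. of_real (g y))"
    using integrable_chi_mult_dens dens_integrable[OF g]
    by (simp add: centered_chi_def left_diff_distrib)
  then show ?thesis
    by (simp add: dens_integral[OF g] fcoef_eq_integral_chi)
qed

lemma integral_centered_chi_mult_cnj_dens:
  "(CLINT y|M01. centered_chi g j y * cnj (centered_chi g l y) * of_real (g y))
     = fcoef g (j - l) - fcoef g j * cnj (fcoef g l)"
proof -
  have expand: "centered_chi g j y * cnj (centered_chi g l y) * of_real (g y)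
      = chi (j - l) y * of_real (g y) - cnj (fcoef g l) * (chi j y * of_real (g y))
        - fcoef g j * (chi (- l) y * of_real (g y)) + fcoef g j * cnj (fcoef g l) * of_real (g y)" for y
    by (simp add: centered_chi_def chi_uminus flip: chi_mult_cnj) (simp add: algebra_simps)
  show ?thesis
    unfolding expand using integrable_chi_mult_dens dens_integrable[OF g]
    by (simp add: dens_integral[OF g] fcoef_uminus flip: fcoef_eq_integral_chi)
qed

lemma integral_norm_sum_centered_chi_sq_le:
  assumes F: "finite F"
  shows "(LINT y|M01. (cmod (\<Sum>j\<in>F. c j * centered_chi g j y))\<^sup>2 * g y)
           \<le> (\<Sum>j\<in>F. \<Sum>l\<in>F. cmod (c j) * cmod (c l) * cmod (fcoef g (j - l)))"
proof -
  (* The covariance matrix is the Toeplitz matrix (g_(j-l)) minus the rank-one matrix g_j conj(g_l). *)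
  define K where "K = (\<Sum>j\<in>F. c j * fcoef g j)"
  have "(LINT y|M01. (cmod (\<Sum>j\<in>F. c j * centered_chi g j y))\<^sup>2 * g y)
      = Re (\<Sum>j\<in>F. \<Sum>l\<in>F. c j * cnj (c l) * (fcoef g (j - l) - fcoef g j * cnj (fcoef g l)))"
    using integral_norm_sum_sq[OF F dens_integrable[OF g], where f="centered_chi g" and B=2]
    by (simp add: norm_centered_chi_le_2[OF g] integral_centered_chi_mult_cnj_dens)
  also have "\<dots> = Re (\<Sum>j\<in>F. \<Sum>l\<in>F. c j * cnj (c l) * fcoef g (j - l)) - Re (K * cnj K)"
    unfolding K_def cnj_sum sum_product
    by (simp add: sum_subtractf algebra_simps)
  also have "\<dots> \<le> Re (\<Sum>j\<in>F. \<Sum>l\<in>F. c j * cnj (c l) * fcoef g (j - l))"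
    by simp
  also have "\<dots> \<le> (\<Sum>j\<in>F. \<Sum>l\<in>F. cmod (c j * cnj (c l) * fcoef g (j - l)))"
    by (intro order_trans[OF complex_Re_le_cmod] order_trans[OF norm_sum] sum_mono norm_sum)
  finally show ?thesis
    by (simp add: norm_mult)
qed

end

section \<open>The kernel\<close>

lemma finite_Jk: "finite (Jk k)"
  by (rule finite_subset[of _ "{- int k..int k}"]) (auto simp: Jk_def)

lemma uminus_mem_Jk_iff: "- j \<in> Jk k \<longleftrightarrow> j \<in> Jk k"
  by (auto simp: Jk_def)

definition weight :: "(real \<Rightarrow> real) \<Rightarrow> int \<Rightarrow> real" where
  "weight \<phi> j = 1 / (cmod (fcoef \<phi> j))\<^sup>2"

lemma weight_nonneg: "0 \<le> weight \<phi> j"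
  by (simp add: weight_def)

lemma weight_uminus: "weight \<phi> (- j) = weight \<phi> j"
  by (simp add: weight_def fcoef_uminus)

lemma weight_ge_1:
  assumes "dens \<phi>" "fcoef \<phi> j \<noteq> 0"
  shows "1 \<le> weight \<phi> j"
proof -
  have "(cmod (fcoef \<phi> j))\<^sup>2 \<le> 1"
    using norm_fcoef_dens_le_1[OF assms(1)] by (simp add: power_le_one)
  with assms(2) show ?thesis by (simp add: weight_def)
qed

lemma weight_le_mk_sq:
  assumes "j \<in> Jk k"
  shows "weight \<phi> j \<le> (mk \<phi> k)\<^sup>2"
proof -
  have "cmod (fcoef \<phi> j) = cmod (fcoef \<phi> \<bar>j\<bar>)"
    by (cases "0 \<le> j") (auto simp: fcoef_uminus[of \<phi> "- j", simplified])
  moreover have "\<bar>j\<bar> \<in> {1..int k}" using assms by (auto simp: Jk_def)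
  ultimately have "1 / cmod (fcoef \<phi> j) \<le> mk \<phi> k"
    unfolding mk_def by (intro Max_ge) auto
  then have "(1 / cmod (fcoef \<phi> j))\<^sup>2 \<le> (mk \<phi> k)\<^sup>2"
    by (intro power_mono) auto
  then show ?thesis by (simp add: weight_def power_divide)
qed

lemma nuk_pow_4: "nuk \<phi> k ^ 4 = (\<Sum>j\<in>Jk k. (weight \<phi> j)\<^sup>2)"
  unfolding nuk_def weight_def
  by (simp add: sum_nonneg power_divide flip: power_mult)

lemma nuk_sq: "(nuk \<phi> k)\<^sup>2 = sqrt (\<Sum>j\<in>Jk k. (weight \<phi> j)\<^sup>2)"
proof -
  have "((nuk \<phi> k)\<^sup>2)\<^sup>2 = (\<Sum>j\<in>Jk k. (weight \<phi> j)\<^sup>2)"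
    by (simp add: nuk_pow_4 flip: power_mult)
  from real_sqrt_unique[OF this] show ?thesis by simp
qed

lemma sum_weight_mult_le_nuk_sq:
  "(\<Sum>j\<in>Jk k. weight \<phi> j * x j) \<le> (nuk \<phi> k)\<^sup>2 * sqrt (\<Sum>j\<in>Jk k. (x j)\<^sup>2)"
proof -
  have "(\<Sum>j\<in>Jk k. weight \<phi> j * x j)\<^sup>2 \<le> (\<Sum>j\<in>Jk k. (weight \<phi> j)\<^sup>2) * (\<Sum>j\<in>Jk k. (x j)\<^sup>2)"
    by (rule Cauchy_Schwarz_ineq_sum)
  then show ?thesis
    by (simp add: nuk_sq real_le_rsqrt flip: real_sqrt_mult)
qed

lemma hk_eq_sum_centered_chi:
  "hk \<phi> g k y1 y2
     = (\<Sum>j\<in>Jk k. of_real (weight \<phi> j) * centered_chi g j y1 * cnj (centered_chi g j y2))"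
  unfolding hk_def
proof (intro sum.cong refl)
  fix j
  have "ej j (- y1) - fcoef g j = centered_chi g j y1"
    and "ej j y2 - cnj (fcoef g j) = cnj (centered_chi g j y2)"
    by (simp_all add: centered_chi_def ej_uminus chi_eq_cnj_ej)
  then show "(ej j (- y1) - fcoef g j) * (ej j y2 - cnj (fcoef g j)) / of_real ((cmod (fcoef \<phi> j))\<^sup>2)
      = of_real (weight \<phi> j) * centered_chi g j y1 * cnj (centered_chi g j y2)"
    by (simp add: weight_def field_simps)
qed

lemma borel_measurable_hk [measurable]:
  "(\<lambda>y. hk \<phi> g k y y2) \<in> borel_measurable M01"
  "(\<lambda>z. hk \<phi> g k (fst z) (snd z)) \<in> borel_measurable (M01 \<Otimes>\<^sub>M M01)"
  unfolding hk_eq_sum_centered_chi by measurable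

lemma cnj_hk: "cnj (hk \<phi> g k y1 y2) = hk \<phi> g k y1 y2"
proof -
  have "cnj (hk \<phi> g k y1 y2)
      = (\<Sum>j\<in>Jk k. of_real (weight \<phi> (- j)) * centered_chi g (- j) y1 * cnj (centered_chi g (- j) y2))"
    by (simp add: hk_eq_sum_centered_chi weight_uminus centered_chi_uminus mult.assoc)
  also have "\<dots> = hk \<phi> g k y1 y2"
    unfolding hk_eq_sum_centered_chi by (rule sum_uminus_reindex[OF uminus_mem_Jk_iff])
  finally show ?thesis .
qed

lemma Im_hk: "Im (hk \<phi> g k y1 y2) = 0"
  using cnj_hk[of \<phi> g k y1 y2] by (metis cnj.sel(2) neg_equal_zero)

lemma Re_hk_sq: "(Re (hk \<phi> g k y1 y2))\<^sup>2 = (cmod (hk \<phi> g k y1 y2))\<^sup>2"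
  by (simp add: cmod_def Im_hk)

lemma of_real_Re_hk: "complex_of_real (Re (hk \<phi> g k y1 y2)) = hk \<phi> g k y1 y2"
  using Im_hk by (simp add: complex_eq_iff)

lemma hk_swap: "hk \<phi> g k y2 y1 = hk \<phi> g k y1 y2"
proof -
  have "hk \<phi> g k y2 y1 = cnj (hk \<phi> g k y1 y2)"
    unfolding hk_eq_sum_centered_chi by (simp add: mult.commute mult.left_commute)
  then show ?thesis by (simp add: cnj_hk)
qed

lemma integral_hk_dens:
  assumes "dens g"
  shows "(CLINT y1|M01. hk \<phi> g k y1 y2 * of_real (g y1)) = 0"
proof -
  have "integrable M01 (\<lambda>y. centered_chi g j y * of_real (g y))" for j
    using norm_centered_chi_le_2[OF assms]
    by (intro integrable_mult_of_real_if_bounded[OF dens_integrable[OF assms], where B=2]) auto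
  then show ?thesis
    unfolding hk_eq_sum_centered_chi sum_distrib_right
    by (simp add: mult.assoc mult.left_commute[of _ "cnj _"] integral_centered_chi_dens[OF assms])
qed

lemma norm_hk_le:
  assumes "dens g"
  shows "cmod (hk \<phi> g k y1 y2) \<le> 4 * (\<Sum>j\<in>Jk k. weight \<phi> j)"
proof -
  have "cmod (hk \<phi> g k y1 y2)
      \<le> (\<Sum>j\<in>Jk k. weight \<phi> j * (cmod (centered_chi g j y1) * cmod (centered_chi g j y2)))"
    unfolding hk_eq_sum_centered_chi
    by (rule order_trans[OF norm_sum]) (simp add: norm_mult weight_nonneg mult.assoc)
  also have "\<dots> \<le> (\<Sum>j\<in>Jk k. weight \<phi> j * (2 * 2))"
    using norm_centered_chi_le_2[OF assms]
    by (intro sum_mono mult_left_mono mult_mono weight_nonneg) auto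
  finally show ?thesis
    by (simp add: sum_distrib_left mult.commute)
qed

section \<open>Bounds on the kernel\<close>

locale deconvolution_kernel =
  fixes \<phi> g :: "real \<Rightarrow> real" and k :: nat
  assumes phi: "dens \<phi>" and phi_nz: "\<And>j. fcoef \<phi> j \<noteq> 0" and g: "dens g" and k: "1 \<le> k"
begin

lemma g_nonneg: "x \<in> {0..<1} \<Longrightarrow> 0 \<le> g x"
  by (rule dens_nonneg[OF g])

lemmas g_measurable [measurable] = dens_borel_measurable[OF g]

lemma sum_weight_le_nuk_pow_4: "(\<Sum>j\<in>Jk k. weight \<phi> j) \<le> nuk \<phi> k ^ 4"
  unfolding nuk_pow_4 using weight_ge_1[OF phi phi_nz]
  by (intro sum_mono) (simp add: power2_eq_square mult_le_cancel_left1)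

lemma sum_weight_mult_norm_fcoef_diff_le:
  "(\<Sum>l\<in>Jk k. weight \<phi> l * cmod (fcoef g (j - l))) \<le> (nuk \<phi> k)\<^sup>2 * l2norm g"
proof -
  have "sqrt (\<Sum>l\<in>Jk k. (cmod (fcoef g (j - l)))\<^sup>2) \<le> l2norm g"
    using sum_norm_fcoef_sq_le_l2norm_sq[OF dens_borel_measurable[OF g] dens_square_integrable[OF g]
        finite_Jk, of "\<lambda>l. j - l"]
    by (simp add: inj_on_def l2norm_def infsum_nonneg)
  with sum_weight_mult_le_nuk_sq[where x="\<lambda>l. cmod (fcoef g (j - l))" and \<phi>=\<phi> and k=k]
  show ?thesis
    by (meson order_trans mult_left_mono zero_le_power2)
qed

lemma abs_Re_hk_le: "\<bar>Re (hk \<phi> g k y1 y2)\<bar> \<le> 4 * nuk \<phi> k ^ 4"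
  using abs_Re_le_cmod[of "hk \<phi> g k y1 y2"] norm_hk_le[OF g, of \<phi> k y1 y2] sum_weight_le_nuk_pow_4
  by linarith

lemma integral_Re_hk_sq_le:
  "(LINT y1|M01. (Re (hk \<phi> g k y1 y2))\<^sup>2 * g y1) \<le> (3 * l2norm g * nuk \<phi> k ^ 3)\<^sup>2"
proof -
  define c where "c j = of_real (weight \<phi> j) * cnj (centered_chi g j y2)" for j
  have c_le: "cmod (c j) \<le> 2 * weight \<phi> j" for j
    using mult_left_mono[OF norm_centered_chi_le_2[OF g, of j y2] weight_nonneg[of \<phi> j]]
    by (simp add: c_def norm_mult weight_nonneg mult.commute)
  have "(LINT y1|M01. (Re (hk \<phi> g k y1 y2))\<^sup>2 * g y1)
      = (LINT y1|M01. (cmod (\<Sum>j\<in>Jk k. c j * centered_chi g j y1))\<^sup>2 * g y1)"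
    by (simp only: Re_hk_sq) (simp add: hk_eq_sum_centered_chi c_def mult_ac)
  also have "\<dots> \<le> (\<Sum>j\<in>Jk k. \<Sum>l\<in>Jk k. cmod (c j) * cmod (c l) * cmod (fcoef g (j - l)))"
    by (rule integral_norm_sum_centered_chi_sq_le[OF g finite_Jk])
  also have "\<dots> \<le> (\<Sum>j\<in>Jk k. \<Sum>l\<in>Jk k. 4 * (weight \<phi> j * (weight \<phi> l * cmod (fcoef g (j - l)))))"
  proof (intro sum_mono)
    fix j l
    have "cmod (c j) * cmod (c l) \<le> (2 * weight \<phi> j) * (2 * weight \<phi> l)"
      by (intro mult_mono c_le) (auto simp: weight_nonneg)
    from mult_right_mono[OF this norm_ge_zero[of "fcoef g (j - l)"]]
    show "cmod (c j) * cmod (c l) * cmod (fcoef g (j - l))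
        \<le> 4 * (weight \<phi> j * (weight \<phi> l * cmod (fcoef g (j - l))))"
      by (simp add: mult_ac)
  qed
  also have "\<dots> \<le> 4 * (\<Sum>j\<in>Jk k. weight \<phi> j * ((nuk \<phi> k)\<^sup>2 * l2norm g))"
    unfolding sum_distrib_left[symmetric]
    by (intro mult_left_mono sum_mono sum_weight_mult_norm_fcoef_diff_le weight_nonneg) auto
  also have "\<dots> = 4 * ((\<Sum>j\<in>Jk k. weight \<phi> j) * ((nuk \<phi> k)\<^sup>2 * l2norm g))"
    by (simp add: sum_distrib_right)
  also have "\<dots> \<le> 4 * (nuk \<phi> k ^ 4 * ((nuk \<phi> k)\<^sup>2 * l2norm g))"
    using l2norm_dens_ge_1[OF g]
    by (intro mult_left_mono mult_right_mono sum_weight_le_nuk_pow_4) auto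
  also have "\<dots> \<le> (3 * l2norm g * nuk \<phi> k ^ 3)\<^sup>2"
  proof -
    have "4 * l2norm g \<le> 9 * (l2norm g)\<^sup>2"
      using l2norm_dens_ge_1[OF g] by (simp add: power2_eq_square)
    from mult_right_mono[OF this, of "nuk \<phi> k ^ 6"] show ?thesis
      by (simp add: power_mult_distrib mult_ac flip: power_add power_mult)
  qed
  finally show ?thesis .
qed

lemma g_pair_integrable: "integrable (M01 \<Otimes>\<^sub>M M01) (\<lambda>z. g (fst z) * g (snd z))"
  by (rule M01_pair.integrable_mult_fst_snd[OF dens_integrable[OF g] dens_integrable[OF g]])

lemma g_pair_nonneg: "AE z in M01 \<Otimes>\<^sub>M M01. 0 \<le> g (fst z) * g (snd z)"
  by (rule AE_I2) (auto simp: space_pair_measure g_nonneg)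

lemma
  shows integrable_Re_hk_sq_pair:
      "integrable (M01 \<Otimes>\<^sub>M M01) (\<lambda>z. (Re (hk \<phi> g k (fst z) (snd z)))\<^sup>2 * g (fst z) * g (snd z))"
    and integral_Re_hk_sq_pair:
      "(LINT z|(M01 \<Otimes>\<^sub>M M01). (Re (hk \<phi> g k (fst z) (snd z)))\<^sup>2 * g (fst z) * g (snd z))
         = (\<Sum>j\<in>Jk k. \<Sum>l\<in>Jk k. weight \<phi> j * weight \<phi> l
              * (cmod (fcoef g (j - l) - fcoef g j * cnj (fcoef g l)))\<^sup>2)"
proof -
  let ?M = "M01 \<Otimes>\<^sub>M M01"
  define f where "f j z = centered_chi g j (fst z) * cnj (centered_chi g j (snd z))" for j z
  have f_measurable: "f j \<in> borel_measurable ?M" for j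
    unfolding f_def by measurable
  have f_bounded: "cmod (f j z) \<le> 4" for j z
    using mult_mono[OF norm_centered_chi_le_2[OF g] norm_centered_chi_le_2[OF g]]
    by (simp add: f_def norm_mult)
  have integrand_eq: "(Re (hk \<phi> g k (fst z) (snd z)))\<^sup>2 * g (fst z) * g (snd z)
      = (cmod (\<Sum>j\<in>Jk k. of_real (weight \<phi> j) * f j z))\<^sup>2 * (g (fst z) * g (snd z))" for z
    by (simp only: Re_hk_sq) (simp add: hk_eq_sum_centered_chi f_def mult.assoc)
  note expansion = integrable_norm_sum_sq[OF finite_Jk g_pair_integrable f_measurable f_bounded]
    integral_norm_sum_sq[OF finite_Jk g_pair_integrable f_measurable f_bounded]
  show "integrable ?M (\<lambda>z. (Re (hk \<phi> g k (fst z) (snd z)))\<^sup>2 * g (fst z) * g (snd z))"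
    unfolding integrand_eq by (rule expansion(1))
  have factor_integrable: "integrable M01 (\<lambda>y. centered_chi g j y * cnj (centered_chi g l y) * of_real (g y))"
    for j l
    using mult_mono[OF norm_centered_chi_le_2[OF g] norm_centered_chi_le_2[OF g]]
    by (intro integrable_mult_of_real_if_bounded[OF dens_integrable[OF g], where B=4])
      (auto simp: norm_mult)
  have "(CLINT z|?M. f j z * cnj (f l z) * of_real (g (fst z) * g (snd z)))
      = (CLINT z|?M. (centered_chi g j (fst z) * cnj (centered_chi g l (fst z)) * of_real (g (fst z)))
          * cnj (centered_chi g j (snd z) * cnj (centered_chi g l (snd z)) * of_real (g (snd z))))"
    for j l by (simp add: f_def mult_ac)
  also have "\<dots> j l = complex_of_real ((cmod (fcoef g (j - l) - fcoef g j * cnj (fcoef g l)))\<^sup>2)"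
    for j l
    unfolding complex_norm_square M01_pair.integral_mult_fst_snd[OF factor_integrable
        integrable_cnj[OF factor_integrable]]
    by (simp only: Bochner_Integration.integral_cnj integral_centered_chi_mult_cnj_dens[OF g])
  finally show "(LINT z|?M. (Re (hk \<phi> g k (fst z) (snd z)))\<^sup>2 * g (fst z) * g (snd z))
      = (\<Sum>j\<in>Jk k. \<Sum>l\<in>Jk k. weight \<phi> j * weight \<phi> l
          * (cmod (fcoef g (j - l) - fcoef g j * cnj (fcoef g l)))\<^sup>2)"
    unfolding integrand_eq expansion(2) by simp
qed

lemma sum_weight_mult_norm_fcoef_diff_sq_le:
  "(\<Sum>j\<in>Jk k. \<Sum>l\<in>Jk k. weight \<phi> j * weight \<phi> l * (cmod (fcoef g (j - l)))\<^sup>2)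
     \<le> (l2norm g)\<^sup>2 * nuk \<phi> k ^ 4"
proof -
  have "(\<Sum>j\<in>Jk k. \<Sum>l\<in>Jk k. \<bar>weight \<phi> j\<bar> * \<bar>weight \<phi> l\<bar> * (cmod (fcoef g (j - l)))\<^sup>2)
      \<le> (l2norm g)\<^sup>2 * (\<Sum>j\<in>Jk k. (weight \<phi> j)\<^sup>2)"
  proof (rule Schur_test_sum[OF finite_Jk])
    show "(cmod (fcoef g (j - l)))\<^sup>2 = (cmod (fcoef g (l - j)))\<^sup>2" for j l
      using fcoef_uminus[of g "l - j"] by simp
    show "(\<Sum>l\<in>Jk k. (cmod (fcoef g (j - l)))\<^sup>2) \<le> (l2norm g)\<^sup>2" for j
      by (rule sum_norm_fcoef_sq_le_l2norm_sq[OF dens_borel_measurable[OF g]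
          dens_square_integrable[OF g] finite_Jk]) (simp add: inj_on_def)
  qed simp
  then show ?thesis
    by (simp add: weight_nonneg nuk_pow_4)
qed

lemma sum_weight_norm_fcoef_sq_le: "(\<Sum>j\<in>Jk k. weight \<phi> j * (cmod (fcoef g j))\<^sup>2) \<le> (nuk \<phi> k)\<^sup>2 * l2norm g"
proof -
  have "(\<Sum>j\<in>Jk k. ((cmod (fcoef g j))\<^sup>2)\<^sup>2) \<le> (\<Sum>j\<in>Jk k. (cmod (fcoef g j))\<^sup>2)"
  proof (rule sum_mono)
    fix j
    have "(cmod (fcoef g j))\<^sup>2 \<le> 1"
      using norm_fcoef_dens_le_1[OF g, of j] by (simp add: power_le_one)
    from mult_left_le[OF this zero_le_power2]
    show "((cmod (fcoef g j))\<^sup>2)\<^sup>2 \<le> (cmod (fcoef g j))\<^sup>2"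
      by (simp only: power2_eq_square[of "(cmod (fcoef g j))\<^sup>2"])
  qed
  also have "\<dots> \<le> (l2norm g)\<^sup>2"
    using sum_norm_fcoef_sq_le_l2norm_sq[OF dens_borel_measurable[OF g] dens_square_integrable[OF g]
        finite_Jk, of id] by simp
  finally have "sqrt (\<Sum>j\<in>Jk k. ((cmod (fcoef g j))\<^sup>2)\<^sup>2) \<le> l2norm g"
    by (simp add: l2norm_def infsum_nonneg)
  with sum_weight_mult_le_nuk_sq[where x="\<lambda>j. (cmod (fcoef g j))\<^sup>2" and \<phi>=\<phi> and k=k]
  show ?thesis
    by (meson order_trans mult_left_mono zero_le_power2)
qed

lemma integral_Re_hk_sq_pair_le:
  "(LINT z|(M01 \<Otimes>\<^sub>M M01). (Re (hk \<phi> g k (fst z) (snd z)))\<^sup>2 * g (fst z) * g (snd z))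
     \<le> (2 * l2norm g * (nuk \<phi> k)\<^sup>2)\<^sup>2"
proof -
  let ?G = "\<lambda>j. (cmod (fcoef g j))\<^sup>2"
  have cov_le: "(cmod (fcoef g (j - l) - fcoef g j * cnj (fcoef g l)))\<^sup>2
      \<le> 2 * ?G (j - l) + 2 * (?G j * ?G l)" for j l
  proof -
    have "cmod (fcoef g (j - l) - fcoef g j * cnj (fcoef g l))
        \<le> cmod (fcoef g (j - l)) + cmod (fcoef g j) * cmod (fcoef g l)"
      by (rule order_trans[OF norm_triangle_ineq4]) (simp add: norm_mult)
    then have "(cmod (fcoef g (j - l) - fcoef g j * cnj (fcoef g l)))\<^sup>2
        \<le> (cmod (fcoef g (j - l)) + cmod (fcoef g j) * cmod (fcoef g l))\<^sup>2"
      by (rule power_mono) simp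
    also have "\<dots> \<le> 2 * ?G (j - l) + 2 * (cmod (fcoef g j) * cmod (fcoef g l))\<^sup>2"
      using sum_squares_bound[of "cmod (fcoef g (j - l))" "cmod (fcoef g j) * cmod (fcoef g l)"]
      by (simp add: power2_sum)
    finally show ?thesis by (simp add: power_mult_distrib)
  qed
  have "(LINT z|(M01 \<Otimes>\<^sub>M M01). (Re (hk \<phi> g k (fst z) (snd z)))\<^sup>2 * g (fst z) * g (snd z))
      \<le> (\<Sum>j\<in>Jk k. \<Sum>l\<in>Jk k. 2 * (weight \<phi> j * weight \<phi> l * ?G (j - l))
           + 2 * ((weight \<phi> j * ?G j) * (weight \<phi> l * ?G l)))"
    unfolding integral_Re_hk_sq_pair
    using mult_left_mono[OF cov_le mult_nonneg_nonneg[OF weight_nonneg weight_nonneg]]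
    by (intro sum_mono) (simp add: algebra_simps)
  also have "\<dots> = 2 * (\<Sum>j\<in>Jk k. \<Sum>l\<in>Jk k. weight \<phi> j * weight \<phi> l * ?G (j - l))
      + 2 * (\<Sum>j\<in>Jk k. \<Sum>l\<in>Jk k. (weight \<phi> j * ?G j) * (weight \<phi> l * ?G l))"
    by (simp only: sum.distrib sum_distrib_left)
  also have "\<dots> = 2 * (\<Sum>j\<in>Jk k. \<Sum>l\<in>Jk k. weight \<phi> j * weight \<phi> l * ?G (j - l))
      + 2 * (\<Sum>j\<in>Jk k. weight \<phi> j * ?G j)\<^sup>2"
    by (simp only: power2_eq_square[of "sum _ _"] sum_product)
  also have "\<dots> \<le> 2 * ((l2norm g)\<^sup>2 * nuk \<phi> k ^ 4) + 2 * ((nuk \<phi> k)\<^sup>2 * l2norm g)\<^sup>2"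
    using sum_weight_norm_fcoef_sq_le
    by (intro add_mono mult_left_mono sum_weight_mult_norm_fcoef_diff_sq_le power_mono)
      (auto intro!: sum_nonneg mult_nonneg_nonneg weight_nonneg)
  also have "\<dots> = (2 * l2norm g * (nuk \<phi> k)\<^sup>2)\<^sup>2"
    by (simp add: power_mult_distrib flip: power_mult)
  finally show ?thesis .
qed

lemma integral_Re_hk_mult_le:
  assumes [measurable]: "\<zeta> \<in> borel_measurable M01" "\<xi> \<in> borel_measurable M01"
    and \<zeta>: "integrable M01 (\<lambda>y. (\<zeta> y)\<^sup>2 * g y)" "(LINT y|M01. (\<zeta> y)\<^sup>2 * g y) \<le> 1"
    and \<xi>: "integrable M01 (\<lambda>y. (\<xi> y)\<^sup>2 * g y)" "(LINT y|M01. (\<xi> y)\<^sup>2 * g y) \<le> 1"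
  shows "(LINT z|(M01 \<Otimes>\<^sub>M M01). Re (hk \<phi> g k (fst z) (snd z)) * \<zeta> (fst z) * \<xi> (snd z)
           * g (fst z) * g (snd z)) \<le> 2 * l2norm g * (nuk \<phi> k)\<^sup>2"
proof -
  let ?M = "M01 \<Otimes>\<^sub>M M01"
  have product_eq: "(\<zeta> (fst z) * \<xi> (snd z))\<^sup>2 * (g (fst z) * g (snd z))
      = ((\<zeta> (fst z))\<^sup>2 * g (fst z)) * ((\<xi> (snd z))\<^sup>2 * g (snd z))" for z
    by (simp add: power_mult_distrib mult_ac)
  have product_integrable: "integrable ?M (\<lambda>z. (\<zeta> (fst z) * \<xi> (snd z))\<^sup>2 * (g (fst z) * g (snd z)))"
    unfolding product_eq by (rule M01_pair.integrable_mult_fst_snd[OF \<zeta>(1) \<xi>(1)])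
  have product_le: "(LINT z|?M. (\<zeta> (fst z) * \<xi> (snd z))\<^sup>2 * (g (fst z) * g (snd z))) \<le> 1"
    unfolding product_eq M01_pair.integral_mult_fst_snd[OF \<zeta>(1) \<xi>(1)]
    using \<zeta>(2) \<xi>(2) g_nonneg
    by (intro mult_le_one) (auto intro!: integral_nonneg_AE)
  have product_nonneg: "0 \<le> (LINT z|?M. (\<zeta> (fst z) * \<xi> (snd z))\<^sup>2 * (g (fst z) * g (snd z)))"
    using g_pair_nonneg by (auto intro!: integral_nonneg_AE)
  have "(LINT z|?M. Re (hk \<phi> g k (fst z) (snd z)) * \<zeta> (fst z) * \<xi> (snd z) * g (fst z) * g (snd z))
      = (LINT z|?M. Re (hk \<phi> g k (fst z) (snd z)) * (\<zeta> (fst z) * \<xi> (snd z)) * (g (fst z) * g (snd z)))"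
    by (simp add: mult_ac)
  also have "\<dots> \<le> sqrt (LINT z|?M. (Re (hk \<phi> g k (fst z) (snd z)))\<^sup>2 * (g (fst z) * g (snd z)))
      * sqrt (LINT z|?M. (\<zeta> (fst z) * \<xi> (snd z))\<^sup>2 * (g (fst z) * g (snd z)))"
    using integrable_Re_hk_sq_pair product_integrable g_pair_nonneg
    by (intro weighted_Cauchy_Schwarz) (simp_all add: mult.assoc)
  also have "\<dots> \<le> 2 * l2norm g * (nuk \<phi> k)\<^sup>2 * 1"
    using integral_Re_hk_sq_pair_le product_le product_nonneg l2norm_dens_ge_1[OF g]
    by (intro mult_mono) (simp_all add: mult.assoc real_le_lsqrt)
  finally show ?thesis by simp
qed

lemma integrable_mult_dens_if_square_integrable:
  assumes "\<zeta> \<in> borel_measurable M01" "integrable M01 (\<lambda>y. (\<zeta> y)\<^sup>2 * g y)"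
  shows "integrable M01 (\<lambda>y. \<zeta> y * g y)"
proof -
  have "integrable M01 (\<lambda>y. \<zeta> y * 1 * g y)"
    by (rule weighted_Cauchy_Schwarz_integrable)
      (use assms dens_integrable[OF g] g_nonneg in auto)
  then show ?thesis by simp
qed

lemma integral_norm_sum_centered_chi_sq_le_row_sum:
  assumes row_sums: "\<And>j. (\<Sum>l\<in>Jk k. cmod (fcoef g (j - l))) \<le> L"
  shows "(LINT y|M01. (cmod (\<Sum>j\<in>Jk k. c j * centered_chi g j y))\<^sup>2 * g y)
           \<le> L * (\<Sum>j\<in>Jk k. (cmod (c j))\<^sup>2)"
proof -
  have "(\<Sum>j\<in>Jk k. \<Sum>l\<in>Jk k. \<bar>cmod (c j)\<bar> * \<bar>cmod (c l)\<bar> * cmod (fcoef g (j - l)))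
      \<le> L * (\<Sum>j\<in>Jk k. (cmod (c j))\<^sup>2)"
  proof (rule Schur_test_sum[OF finite_Jk _ _ row_sums])
    show "cmod (fcoef g (j - l)) = cmod (fcoef g (l - j))" for j l
      using fcoef_uminus[of g "l - j"] by simp
  qed simp
  then have "(\<Sum>j\<in>Jk k. \<Sum>l\<in>Jk k. cmod (c j) * cmod (c l) * cmod (fcoef g (j - l)))
      \<le> L * (\<Sum>j\<in>Jk k. (cmod (c j))\<^sup>2)"
    by simp
  from order_trans[OF integral_norm_sum_centered_chi_sq_le[OF g finite_Jk] this] show ?thesis .
qed

lemma norm_integral_mult_dens_le:
  fixes Q :: "real \<Rightarrow> complex"
  assumes [measurable]: "Q \<in> borel_measurable M01" "\<zeta> \<in> borel_measurable M01"
    and Q_bounded: "\<And>y. cmod (Q y) \<le> B" and \<zeta>: "integrable M01 (\<lambda>y. (\<zeta> y)\<^sup>2 * g y)"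
  shows "cmod (CLINT y|M01. Q y * of_real (\<zeta> y * g y))
           \<le> sqrt (LINT y|M01. (cmod (Q y))\<^sup>2 * g y) * sqrt (LINT y|M01. (\<zeta> y)\<^sup>2 * g y)"
proof -
  have "integrable M01 (\<lambda>y. (cmod (Q y))\<^sup>2 * of_real (g y))"
    by (rule integrable_mult_of_real_if_bounded[OF dens_integrable[OF g], where B="B\<^sup>2"])
      (auto intro: power_mono Q_bounded)
  then have Q_integrable: "integrable M01 (\<lambda>y. (cmod (Q y))\<^sup>2 * g y)"
    by simp
  have "cmod (CLINT y|M01. Q y * of_real (\<zeta> y * g y)) \<le> (LINT y|M01. cmod (Q y * of_real (\<zeta> y * g y)))"
    by (rule integral_norm_bound)
  also have "\<dots> = (LINT y|M01. cmod (Q y) * \<bar>\<zeta> y\<bar> * g y)"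
    by (rule Bochner_Integration.integral_cong) (auto simp: norm_mult abs_mult g_nonneg)
  also have "\<dots> \<le> sqrt (LINT y|M01. (cmod (Q y))\<^sup>2 * g y) * sqrt (LINT y|M01. \<bar>\<zeta> y\<bar>\<^sup>2 * g y)"
    using Q_integrable \<zeta> g_nonneg by (intro weighted_Cauchy_Schwarz) auto
  finally show ?thesis
    by simp
qed

(* With u_j = E[a_j zeta] and Q = sum_j w_j conj(u_j) a_j, the sum S = sum_j w_j |u_j|^2 equals
   E[Q zeta] <= (E |Q|^2)^(1/2), while the Schur test gives E |Q|^2 <= L m_k^2 S. *)

lemma sum_weight_norm_integral_centered_chi_sq_le:
  assumes [measurable]: "\<zeta> \<in> borel_measurable M01"
    and \<zeta>: "integrable M01 (\<lambda>y. (\<zeta> y)\<^sup>2 * g y)" "(LINT y|M01. (\<zeta> y)\<^sup>2 * g y) \<le> 1"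
    and row_sums: "\<And>j. (\<Sum>l\<in>Jk k. cmod (fcoef g (j - l))) \<le> L"
  shows "(\<Sum>j\<in>Jk k. weight \<phi> j * (cmod (CLINT y|M01. centered_chi g j y * of_real (\<zeta> y * g y)))\<^sup>2)
           \<le> L * (mk \<phi> k)\<^sup>2"
proof -
  define u where "u j = (CLINT y|M01. centered_chi g j y * of_real (\<zeta> y * g y))" for j
  define S where "S = (\<Sum>j\<in>Jk k. weight \<phi> j * (cmod (u j))\<^sup>2)"
  define c where "c j = of_real (weight \<phi> j) * cnj (u j)" for j
  define Q where "Q y = (\<Sum>j\<in>Jk k. c j * centered_chi g j y)" for y
  have S_nonneg: "0 \<le> S"
    unfolding S_def by (intro sum_nonneg mult_nonneg_nonneg weight_nonneg) auto
  have L_nonneg: "0 \<le> L"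
    using row_sums[of 0] by (meson order_trans sum_nonneg norm_ge_zero)
  have "(LINT y|M01. (cmod (Q y))\<^sup>2 * g y) \<le> L * (\<Sum>j\<in>Jk k. (cmod (c j))\<^sup>2)"
    unfolding Q_def by (rule integral_norm_sum_centered_chi_sq_le_row_sum[OF row_sums])
  also have "\<dots> \<le> L * ((mk \<phi> k)\<^sup>2 * S)"
    unfolding S_def sum_distrib_left[of "(mk \<phi> k)\<^sup>2"]
  proof (intro mult_left_mono[OF sum_mono L_nonneg])
    fix j assume "j \<in> Jk k"
    then have "weight \<phi> j * (weight \<phi> j * (cmod (u j))\<^sup>2) \<le> (mk \<phi> k)\<^sup>2 * (weight \<phi> j * (cmod (u j))\<^sup>2)"
      by (intro mult_right_mono weight_le_mk_sq mult_nonneg_nonneg weight_nonneg) auto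
    then show "(cmod (c j))\<^sup>2 \<le> (mk \<phi> k)\<^sup>2 * (weight \<phi> j * (cmod (u j))\<^sup>2)"
      by (simp add: c_def norm_mult power_mult_distrib weight_nonneg power2_eq_square mult_ac)
  qed
  finally have V_le: "(LINT y|M01. (cmod (Q y))\<^sup>2 * g y) \<le> L * (mk \<phi> k)\<^sup>2 * S"
    by (simp add: mult_ac)
  have \<zeta>g: "integrable M01 (\<lambda>y. \<zeta> y * g y)"
    by (rule integrable_mult_dens_if_square_integrable) (use \<zeta> in auto)
  have centered_integrable: "integrable M01 (\<lambda>y. centered_chi g j y * of_real (\<zeta> y * g y))" for j
    by (rule integrable_mult_of_real_if_bounded[OF \<zeta>g]) (auto intro: norm_centered_chi_le_2[OF g])
  have Q_bounded: "cmod (Q y) \<le> (\<Sum>j\<in>Jk k. cmod (c j) * 2)" for y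
    unfolding Q_def using norm_centered_chi_le_2[OF g]
    by (intro order_trans[OF norm_sum] sum_mono) (simp add: norm_mult mult_left_mono)
  have "(CLINT y|M01. Q y * of_real (\<zeta> y * g y)) = (\<Sum>j\<in>Jk k. c j * u j)"
    unfolding Q_def u_def sum_distrib_right mult.assoc
    by (subst Bochner_Integration.integral_sum)
      (simp_all add: centered_integrable del: of_real_mult)
  also have "\<dots> = complex_of_real S"
    unfolding S_def c_def of_real_sum
    by (intro sum.cong refl)
      (simp only: of_real_mult complex_norm_square mult.assoc mult.commute[of "cnj _"])
  finally have "S \<le> cmod (CLINT y|M01. Q y * of_real (\<zeta> y * g y))"
    by (metis norm_of_real abs_ge_self)
  also have "\<dots> \<le> sqrt (LINT y|M01. (cmod (Q y))\<^sup>2 * g y) * sqrt (LINT y|M01. (\<zeta> y)\<^sup>2 * g y)"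
    by (rule norm_integral_mult_dens_le[OF _ _ Q_bounded \<zeta>(1)]) (simp_all add: Q_def)
  also have "\<dots> \<le> sqrt (L * (mk \<phi> k)\<^sup>2 * S) * 1"
    using V_le \<zeta>(2) S_nonneg L_nonneg g_nonneg
    by (intro mult_mono) (auto intro!: integral_nonneg_AE)
  finally have "S \<le> sqrt (L * (mk \<phi> k)\<^sup>2 * S)"
    by simp
  from power_mono[OF this S_nonneg, of 2] have "S\<^sup>2 \<le> L * (mk \<phi> k)\<^sup>2 * S"
    using S_nonneg L_nonneg by simp
  then have "S \<le> L * (mk \<phi> k)\<^sup>2"
    using S_nonneg L_nonneg by (cases "S = 0") (auto simp: power2_eq_square)
  then show ?thesis
    by (simp add: S_def u_def)
qed

lemma mk_pos: "0 < mk \<phi> k"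
proof -
  have "1 / cmod (fcoef \<phi> 1) \<le> mk \<phi> k"
    unfolding mk_def by (rule Max_ge) (use k in auto)
  moreover have "0 < 1 / cmod (fcoef \<phi> 1)"
    using phi_nz[of 1] by simp
  ultimately show ?thesis by linarith
qed

lemma integral_Re_hk_mult_eq:
  assumes "integrable M01 (\<lambda>y. \<zeta> y * g y)" "integrable M01 (\<lambda>y. \<xi> y * g y)"
  shows "(LINT z|(M01 \<Otimes>\<^sub>M M01). Re (hk \<phi> g k (fst z) (snd z)) * \<zeta> (fst z) * \<xi> (snd z)
           * g (fst z) * g (snd z))
         = Re (\<Sum>j\<in>Jk k. of_real (weight \<phi> j) * (CLINT y|M01. centered_chi g j y * of_real (\<zeta> y * g y))
             * cnj (CLINT y|M01. centered_chi g j y * of_real (\<xi> y * g y)))"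
proof -
  let ?M = "M01 \<Otimes>\<^sub>M M01"
  let ?u = "\<lambda>j y. centered_chi g j y * of_real (\<zeta> y * g y)"
  let ?v = "\<lambda>j y. cnj (centered_chi g j y) * of_real (\<xi> y * g y)"
  have u_integrable: "integrable M01 (?u j)" for j
    by (rule integrable_mult_of_real_if_bounded[OF assms(1), where B=2])
      (auto intro: norm_centered_chi_le_2[OF g])
  have v_integrable: "integrable M01 (?v j)" for j
    by (rule integrable_mult_of_real_if_bounded[OF assms(2), where B=2])
      (auto intro: norm_centered_chi_le_2[OF g])
  have v_integral: "(CLINT y|M01. ?v j y) = cnj (CLINT y|M01. centered_chi g j y * of_real (\<xi> y * g y))"
    for j
    by (simp only: complex_cnj_mult complex_cnj_complex_of_real flip: Bochner_Integration.integral_cnj)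
  have pointwise: "complex_of_real (Re (hk \<phi> g k (fst z) (snd z)) * \<zeta> (fst z) * \<xi> (snd z)
        * g (fst z) * g (snd z))
      = (\<Sum>j\<in>Jk k. of_real (weight \<phi> j) * (?u j (fst z) * ?v j (snd z)))" for z
    by (simp only: of_real_mult of_real_Re_hk)
      (simp add: hk_eq_sum_centered_chi sum_distrib_left sum_distrib_right mult_ac)
  have "complex_of_real (LINT z|?M. Re (hk \<phi> g k (fst z) (snd z)) * \<zeta> (fst z) * \<xi> (snd z)
        * g (fst z) * g (snd z))
      = (CLINT z|?M. \<Sum>j\<in>Jk k. of_real (weight \<phi> j) * (?u j (fst z) * ?v j (snd z)))"
    by (simp only: pointwise flip: integral_complex_of_real)
  also have "\<dots> = (\<Sum>j\<in>Jk k. of_real (weight \<phi> j) * (CLINT z|?M. ?u j (fst z) * ?v j (snd z)))"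
    by (simp only: Bochner_Integration.integral_sum integral_mult_right_zero
        integrable_mult_right M01_pair.integrable_mult_fst_snd[OF u_integrable v_integrable])
  also have "\<dots> = (\<Sum>j\<in>Jk k. of_real (weight \<phi> j) * ((CLINT y|M01. ?u j y) * (CLINT y|M01. ?v j y)))"
    by (simp only: M01_pair.integral_mult_fst_snd[OF u_integrable v_integrable])
  also have "\<dots> = (\<Sum>j\<in>Jk k. of_real (weight \<phi> j) * (CLINT y|M01. ?u j y)
      * cnj (CLINT y|M01. centered_chi g j y * of_real (\<xi> y * g y)))"
    by (simp only: v_integral mult.assoc)
  finally show ?thesis
    by (metis Re_complex_of_real)
qed

lemma integral_Re_hk_mult_le_row_sum:
  assumes [measurable]: "\<zeta> \<in> borel_measurable M01" "\<xi> \<in> borel_measurable M01"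
    and \<zeta>: "integrable M01 (\<lambda>y. (\<zeta> y)\<^sup>2 * g y)" "(LINT y|M01. (\<zeta> y)\<^sup>2 * g y) \<le> 1"
    and \<xi>: "integrable M01 (\<lambda>y. (\<xi> y)\<^sup>2 * g y)" "(LINT y|M01. (\<xi> y)\<^sup>2 * g y) \<le> 1"
    and row_sums: "\<And>j. (\<Sum>l\<in>Jk k. cmod (fcoef g (j - l))) \<le> L"
  shows "(LINT z|(M01 \<Otimes>\<^sub>M M01). Re (hk \<phi> g k (fst z) (snd z)) * \<zeta> (fst z) * \<xi> (snd z)
           * g (fst z) * g (snd z)) \<le> L * (mk \<phi> k)\<^sup>2"
proof -
  define u where "u j = (CLINT y|M01. centered_chi g j y * of_real (\<zeta> y * g y))" for j
  define v where "v j = (CLINT y|M01. centered_chi g j y * of_real (\<xi> y * g y))" for j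
  have u_le: "(\<Sum>j\<in>Jk k. weight \<phi> j * (cmod (u j))\<^sup>2) \<le> L * (mk \<phi> k)\<^sup>2"
    unfolding u_def by (rule sum_weight_norm_integral_centered_chi_sq_le[OF _ \<zeta> row_sums]) simp
  have v_le: "(\<Sum>j\<in>Jk k. weight \<phi> j * (cmod (v j))\<^sup>2) \<le> L * (mk \<phi> k)\<^sup>2"
    unfolding v_def by (rule sum_weight_norm_integral_centered_chi_sq_le[OF _ \<xi> row_sums]) simp
  have "(LINT z|(M01 \<Otimes>\<^sub>M M01). Re (hk \<phi> g k (fst z) (snd z)) * \<zeta> (fst z) * \<xi> (snd z)
           * g (fst z) * g (snd z)) = Re (\<Sum>j\<in>Jk k. of_real (weight \<phi> j) * u j * cnj (v j))"
    unfolding u_def v_def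
    by (intro integral_Re_hk_mult_eq integrable_mult_dens_if_square_integrable[OF _ \<zeta>(1)]
        integrable_mult_dens_if_square_integrable[OF _ \<xi>(1)]) simp_all
  also have "\<dots> \<le> (\<Sum>j\<in>Jk k. weight \<phi> j * (cmod (u j) * cmod (v j)))"
    by (rule order_trans[OF complex_Re_le_cmod order_trans[OF norm_sum]])
      (simp add: norm_mult weight_nonneg mult.assoc)
  also have "\<dots> \<le> (\<Sum>j\<in>Jk k. (weight \<phi> j * (cmod (u j))\<^sup>2 + weight \<phi> j * (cmod (v j))\<^sup>2) / 2)"
  proof (rule sum_mono)
    fix j
    from mult_left_mono[OF sum_squares_bound[of "cmod (u j)" "cmod (v j)"] weight_nonneg]
    show "weight \<phi> j * (cmod (u j) * cmod (v j))
        \<le> (weight \<phi> j * (cmod (u j))\<^sup>2 + weight \<phi> j * (cmod (v j))\<^sup>2) / 2"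
      by (simp add: algebra_simps)
  qed
  also have "\<dots> \<le> L * (mk \<phi> k)\<^sup>2"
    using u_le v_le by (simp add: sum_divide_distrib[symmetric] sum.distrib)
  finally show ?thesis .
qed

lemma integral_Re_hk_mult_le_l1norm:
  assumes "\<zeta> \<in> borel_measurable M01" "\<xi> \<in> borel_measurable M01"
    and "integrable M01 (\<lambda>y. (\<zeta> y)\<^sup>2 * g y)" "(LINT y|M01. (\<zeta> y)\<^sup>2 * g y) \<le> 1"
    and "integrable M01 (\<lambda>y. (\<xi> y)\<^sup>2 * g y)" "(LINT y|M01. (\<xi> y)\<^sup>2 * g y) \<le> 1"
  shows "ennreal (LINT z|(M01 \<Otimes>\<^sub>M M01). Re (hk \<phi> g k (fst z) (snd z)) * \<zeta> (fst z) * \<xi> (snd z)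
           * g (fst z) * g (snd z)) \<le> 4 * l1norm g * ennreal ((mk \<phi> k)\<^sup>2)"
proof (cases "l1norm g = top")
  case True
  then show ?thesis
    using mk_pos by (simp add: ennreal_top_mult)
next
  case False
  then obtain L where L: "l1norm g = ennreal L" "0 \<le> L"
    by (cases "l1norm g") auto
  have "(\<Sum>l\<in>Jk k. cmod (fcoef g (j - l))) \<le> L" for j
    using sum_norm_fcoef_le_l1norm[OF finite_Jk, where \<sigma>="\<lambda>l. j - l" and g=g] L
    by (simp add: inj_on_def)
  from integral_Re_hk_mult_le_row_sum[OF assms this]
  have "(LINT z|(M01 \<Otimes>\<^sub>M M01). Re (hk \<phi> g k (fst z) (snd z)) * \<zeta> (fst z) * \<xi> (snd z)
      * g (fst z) * g (snd z)) \<le> L * (mk \<phi> k)\<^sup>2" .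
  also have "\<dots> \<le> 4 * L * (mk \<phi> k)\<^sup>2"
    using L(2) by simp
  finally have "ennreal (LINT z|(M01 \<Otimes>\<^sub>M M01). Re (hk \<phi> g k (fst z) (snd z)) * \<zeta> (fst z)
      * \<xi> (snd z) * g (fst z) * g (snd z)) \<le> ennreal (4 * L * (mk \<phi> k)\<^sup>2)"
    by (rule ennreal_leI)
  also have "\<dots> = 4 * l1norm g * ennreal ((mk \<phi> k)\<^sup>2)"
    using L by (simp add: ennreal_mult)
  finally show ?thesis .
qed

end

theorem lemmaA3:
  fixes \<phi> g :: "real \<Rightarrow> real" and k :: nat
  assumes phi: "dens \<phi>" and phi_nz: "\<forall>j. fcoef \<phi> j \<noteq> 0"
    and g: "dens g" and k: "1 \<le> k"
  defines "h \<equiv> hk \<phi> g k"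
    and "A \<equiv> 4 * (nuk \<phi> k) ^ 4"
    and "B \<equiv> 3 * l2norm g * (nuk \<phi> k) ^ 3"
    and "C \<equiv> 2 * l2norm g * (nuk \<phi> k) ^ 2"
  shows
    "(\<forall>y1\<in>{0..<1}. \<forall>y2\<in>{0..<1}. Im (h y1 y2) = 0)
     \<and> (\<exists>M. \<forall>y1\<in>{0..<1}. \<forall>y2\<in>{0..<1}. cmod (h y1 y2) \<le> M)
     \<and> (\<forall>y1\<in>{0..<1}. \<forall>y2\<in>{0..<1}. h y1 y2 = h y2 y1)
     \<and> (\<forall>y2\<in>{0..<1}. (LINT y1|M01. h y1 y2 * complex_of_real (g y1)) = 0)
     \<and> (\<forall>y1\<in>{0..<1}. \<forall>y2\<in>{0..<1}. \<bar>Re (h y1 y2)\<bar> \<le> A)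
     \<and> (\<forall>y2\<in>{0..<1}. (LINT y1|M01. (Re (h y1 y2))\<^sup>2 * g y1) \<le> B\<^sup>2)
     \<and> (LINT z|(M01 \<Otimes>\<^sub>M M01). (Re (h (fst z) (snd z)))\<^sup>2 * g (fst z) * g (snd z)) \<le> C\<^sup>2
     \<and> (\<forall>\<zeta> \<xi>. \<zeta> \<in> borel_measurable M01 \<longrightarrow> \<xi> \<in> borel_measurable M01
          \<longrightarrow> integrable M01 (\<lambda>y. (\<zeta> y)\<^sup>2 * g y) \<longrightarrow> (LINT y|M01. (\<zeta> y)\<^sup>2 * g y) \<le> 1
          \<longrightarrow> integrable M01 (\<lambda>y. (\<xi> y)\<^sup>2 * g y) \<longrightarrow> (LINT y|M01. (\<xi> y)\<^sup>2 * g y) \<le> 1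
          \<longrightarrow> (LINT z|(M01 \<Otimes>\<^sub>M M01). Re (h (fst z) (snd z)) * \<zeta> (fst z) * \<xi> (snd z)
                  * g (fst z) * g (snd z)) \<le> C)
     \<and> (L2w g = L2w (\<lambda>_. 1) \<longrightarrow>
        (\<forall>\<zeta> \<xi>. \<zeta> \<in> borel_measurable M01 \<longrightarrow> \<xi> \<in> borel_measurable M01
          \<longrightarrow> integrable M01 (\<lambda>y. (\<zeta> y)\<^sup>2 * g y) \<longrightarrow> (LINT y|M01. (\<zeta> y)\<^sup>2 * g y) \<le> 1
          \<longrightarrow> integrable M01 (\<lambda>y. (\<xi> y)\<^sup>2 * g y) \<longrightarrow> (LINT y|M01. (\<xi> y)\<^sup>2 * g y) \<le> 1
          \<longrightarrow> ennreal (LINT z|(M01 \<Otimes>\<^sub>M M01). Re (h (fst z) (snd z)) * \<zeta> (fst z) * \<xi> (snd z)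
                  * g (fst z) * g (snd z))
              \<le> 4 * l1norm g * ennreal ((mk \<phi> k)\<^sup>2)))"
proof -
  interpret deconvolution_kernel \<phi> g k
    using phi phi_nz g k by unfold_locales auto
  show ?thesis
    unfolding h_def A_def B_def C_def
    by (intro conjI ballI allI impI exI[of _ "4 * (\<Sum>j\<in>Jk k. weight \<phi> j)"] norm_hk_le[OF g]
        hk_swap integral_Re_hk_mult_le integral_Re_hk_mult_le_l1norm)
      (simp_all add: Im_hk integral_hk_dens[OF g] abs_Re_hk_le integral_Re_hk_sq_le
        integral_Re_hk_sq_pair_le)
qed

end
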